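(* A bitopological space $(X,\tau[tt],\tau[ff])$ is $\mathbb{B}$-sober if and only if for every pair $(K_{tt},K_{ff})$, where $K_{tt}$ is an irreducible closed subset of $(X,\tau[tt])$ and $K_{ff}$ is an irreducible closed subset of $(X,\tau[ff])$, there is a unique point $x\in X$ such that $K_{tt}$ is the closure of $\{x\}$ in $(X,\tau[tt])$ and $K_{ff}$ is the closure of $\{x\}$ in $(X,\tau[ff])$.
   Context: $\mathbb{B}=\{0,1,tt,ff\}$ is the four-element Boolean algebra with bottom $0$, top $1$, and $tt,ff$ incomparable complements. A bitopological space $(X,\tau[tt],\tau[ff])$ is identified with the $\mathbb{B}$-topology $\tau=\{\lambda\colon X\to\mathbb{B}: \lambda[tt]\in\tau[tt],\ \lambda[ff]\in\tau[ff]\}$, where $\lambda[b]=\{x:\lambda(x)\ge b\}$. For $b\in\mathbb{B}$, $b_X$ is the constant map with value $b$. A $\mathbb{B}$-point of $\tau$ is a frame homomorphism $p\colon\tau\to\mathbb{B}$ (preserving finite meets and arbitrary joins) with $p(b_X)=b$ for all $b\in\mathbb{B}$. The space is $\mathbb{B}$-sober if for every $\mathbb{B}$-point $p$ of $\tau$ there is a unique $x\in X$ with $p(\lambda)=\lambda(x)$ for all $\lambda\in\tau$. An irreducible closed subset of a topological space is a nonempty closed set not contained in the union of two closed sets unless contained in one of them. *)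

theory Defs
  imports "HOL-Analysis.Analysis" "HOL-Library.Product_Order"
begin

text \<open>The four-element Boolean algebra B = {0,1,tt,ff} is represented as bool \<times> bool
  with the componentwise (product) order: 0 = bot = (False,False), 1 = top = (True,True),
  tt = (True,False), ff = (False,True).\<close>

type_synonym B4 = "bool \<times> bool"

definition Btt :: B4 where "Btt = (True, False)"
definition Bff :: B4 where "Bff = (False, True)"

definition Bcut :: "'a set \<Rightarrow> ('a \<Rightarrow> B4) \<Rightarrow> B4 \<Rightarrow> 'a set" where
  "Bcut X l b = {x \<in> X. b \<le> l x}"

definition Bconst :: "'a set \<Rightarrow> B4 \<Rightarrow> 'a \<Rightarrow> B4" where
  "Bconst X b = (\<lambda>x. if x \<in> X then b else bot)"

text \<open>The B-topology of the bitopological space (X, T1, T2), X = topspace T1 = topspace T2.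
  Maps X -> B are represented as functions that are bot outside X.\<close>
definition Btopology :: "'a topology \<Rightarrow> 'a topology \<Rightarrow> ('a \<Rightarrow> B4) set" where
  "Btopology T1 T2 = {l. (\<forall>x. x \<notin> topspace T1 \<longrightarrow> l x = bot)
      \<and> openin T1 (Bcut (topspace T1) l Btt) \<and> openin T2 (Bcut (topspace T1) l Bff)}"

text \<open>B-point: frame homomorphism tau -> B (finite meets, arbitrary joins, computed
  pointwise in tau) with p(b_X) = b for all b.\<close>
definition Bpoint :: "'a topology \<Rightarrow> 'a topology \<Rightarrow> (('a \<Rightarrow> B4) \<Rightarrow> B4) \<Rightarrow> bool" where
  "Bpoint T1 T2 p \<longleftrightarrow>
     (\<forall>l \<in> Btopology T1 T2. \<forall>m \<in> Btopology T1 T2. p (inf l m) = inf (p l) (p m))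
   \<and> (\<forall>S. S \<subseteq> Btopology T1 T2 \<longrightarrow> p (Sup S) = Sup (p ` S))
   \<and> (\<forall>b. p (Bconst (topspace T1) b) = b)"

definition B_sober :: "'a topology \<Rightarrow> 'a topology \<Rightarrow> bool" where
  "B_sober T1 T2 \<longleftrightarrow>
     (\<forall>p. Bpoint T1 T2 p \<longrightarrow>
        (\<exists>!x. x \<in> topspace T1 \<and> (\<forall>l \<in> Btopology T1 T2. p l = l x)))"

definition irreducible_closed :: "'a topology \<Rightarrow> 'a set \<Rightarrow> bool" where
  "irreducible_closed T K \<longleftrightarrow> closedin T K \<and> K \<noteq> {} \<and>
     (\<forall>A B. closedin T A \<and> closedin T B \<and> K \<subseteq> A \<union> B \<longrightarrow> K \<subseteq> A \<or> K \<subseteq> B)"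

end

theory Submission
  imports Defs
begin

text \<open>Every member of the B-topology has the form \<open>\<lambda>x. (x \<in> U, x \<in> V)\<close> with \<open>U\<close> open in the
  first and \<open>V\<close> open in the second topology, so the B-topology is the product of the two frames
  of opens. Hence a B-point splits into a pair of completely prime filters of opens, one for each
  topology, and a completely prime filter of opens consists exactly of the opens meeting some
  irreducible closed set (the complement of the largest open set outside the filter). A B-point
  is evaluation at \<open>x\<close> precisely when both irreducible closed sets are the closures of \<open>{x}\<close>,
  so unique representation of B-points and of pairs of irreducible closed sets say the same.\<close>

lemma closedin_eq_iff_same_open_meets:
  assumes "closedin T K" "closedin T L"
  shows "K = L \<longleftrightarrow> (\<forall>U. openin T U \<longrightarrow> (U \<inter> K = {} \<longleftrightarrow> U \<inter> L = {}))"
proof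
  assume meets: "\<forall>U. openin T U \<longrightarrow> (U \<inter> K = {} \<longleftrightarrow> U \<inter> L = {})"
  have "openin T (topspace T - K)" "openin T (topspace T - L)"
    using assms by auto
  then show "K = L"
    using meets assms closedin_subset by blast
qed auto

lemma eq_closure_of_singleton_iff:
  assumes "closedin T K" "x \<in> topspace T"
  shows "K = T closure_of {x} \<longleftrightarrow> (\<forall>U. openin T U \<longrightarrow> (U \<inter> K = {} \<longleftrightarrow> x \<notin> U))"
  using closedin_eq_iff_same_open_meets[OF assms(1) closedin_closure_of]
  by (simp add: openin_Int_closure_of_eq_empty)

lemma irreducible_closed_Int_open_eq_empty_iff:
  assumes K: "irreducible_closed T K" and "openin T U" "openin T V"
  shows "U \<inter> V \<inter> K = {} \<longleftrightarrow> U \<inter> K = {} \<or> V \<inter> K = {}"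
proof
  assume "U \<inter> V \<inter> K = {}"
  moreover have "K \<subseteq> topspace T"
    using K closedin_subset unfolding irreducible_closed_def by blast
  ultimately have "K \<subseteq> (topspace T - U) \<union> (topspace T - V)"
    by blast
  moreover have "closedin T (topspace T - U)" "closedin T (topspace T - V)"
    using assms by blast+
  ultimately have "K \<subseteq> topspace T - U \<or> K \<subseteq> topspace T - V"
    using K unfolding irreducible_closed_def by blast
  then show "U \<inter> K = {} \<or> V \<inter> K = {}"
    by blast
qed blast

definition completely_prime_filter :: "'a topology \<Rightarrow> ('a set \<Rightarrow> bool) \<Rightarrow> bool" where
  "completely_prime_filter T q \<longleftrightarrow> q (topspace T)
     \<and> (\<forall>U V. openin T U \<and> openin T V \<longrightarrow> q (U \<inter> V) = (q U \<and> q V))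
     \<and> (\<forall>F. (\<forall>U\<in>F. openin T U) \<longrightarrow> q (\<Union>F) = (\<exists>U\<in>F. q U))"

lemma completely_prime_filter_eq_meets_irreducible:
  assumes "completely_prime_filter T q"
  obtains K where "irreducible_closed T K" "\<And>U. openin T U \<Longrightarrow> q U \<longleftrightarrow> U \<inter> K \<noteq> {}"
proof -
  have top: "q (topspace T)"
    and meet: "\<And>U V. openin T U \<Longrightarrow> openin T V \<Longrightarrow> q (U \<inter> V) = (q U \<and> q V)"
    and join: "\<And>F. \<forall>U\<in>F. openin T U \<Longrightarrow> q (\<Union>F) = (\<exists>U\<in>F. q U)"
    using assms unfolding completely_prime_filter_def by blast+
  define W where "W = \<Union>{U. openin T U \<and> \<not> q U}"
  have "openin T W" "\<not> q W"
    unfolding W_def by (auto simp: join)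
  have meets: "q U \<longleftrightarrow> U \<inter> (topspace T - W) \<noteq> {}" if "openin T U" for U
  proof
    assume "q U"
    then have "\<not> U \<subseteq> W"
      using meet[OF \<open>openin T U\<close> \<open>openin T W\<close>] \<open>\<not> q W\<close> by (metis Int_absorb2)
    then show "U \<inter> (topspace T - W) \<noteq> {}"
      using openin_subset[OF that] by blast
  qed (use that W_def in blast)
  have "irreducible_closed T (topspace T - W)"
    unfolding irreducible_closed_def
  proof (intro conjI allI impI)
    show "closedin T (topspace T - W)"
      using \<open>openin T W\<close> by blast
    show "topspace T - W \<noteq> {}"
      using meets[of "topspace T"] top by auto
  next
    fix A B
    assume AB: "closedin T A \<and> closedin T B \<and> topspace T - W \<subseteq> A \<union> B"
    then have "openin T (topspace T - A)" "openin T (topspace T - B)"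
      by blast+
    moreover have "\<not> q ((topspace T - A) \<inter> (topspace T - B))"
      using AB openin_Int[OF calculation] meets by blast
    ultimately show "topspace T - W \<subseteq> A \<or> topspace T - W \<subseteq> B"
      using meet meets by blast
  qed
  with meets show thesis
    using that by blast
qed

lemma Btt_le_iff: "Btt \<le> a \<longleftrightarrow> fst a"
  by (auto simp: Btt_def less_eq_prod_def)

lemma Bff_le_iff: "Bff \<le> a \<longleftrightarrow> snd a"
  by (auto simp: Bff_def less_eq_prod_def)

definition Bpair :: "'a set \<Rightarrow> 'a set \<Rightarrow> 'a \<Rightarrow> B4" where
  "Bpair U V = (\<lambda>x. (x \<in> U, x \<in> V))"

lemma Bpair_apply [simp]: "Bpair U V x = (x \<in> U, x \<in> V)"
  by (simp add: Bpair_def)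

lemma Bcut_Bpair: "Bcut X (Bpair U V) Btt = X \<inter> U" "Bcut X (Bpair U V) Bff = X \<inter> V"
  by (auto simp: Bcut_def Btt_le_iff Bff_le_iff)

lemma Btopology_eq:
  assumes "topspace T1 = topspace T2"
  shows "Btopology T1 T2 = {Bpair U V |U V. openin T1 U \<and> openin T2 V}"
proof (intro equalityI subsetI)
  fix l
  assume l: "l \<in> Btopology T1 T2"
  let ?X = "topspace T1"
  have "l = Bpair (Bcut ?X l Btt) (Bcut ?X l Bff)"
    using l by (auto simp: fun_eq_iff prod_eq_iff Btopology_def Bcut_def Btt_le_iff Bff_le_iff)
  with l show "l \<in> {Bpair U V |U V. openin T1 U \<and> openin T2 V}"
    unfolding Btopology_def by blast
next
  fix l
  assume "l \<in> {Bpair U V |U V. openin T1 U \<and> openin T2 V}"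
  then obtain U V where l: "l = Bpair U V" and "openin T1 U" "openin T2 V"
    by blast
  moreover have "U \<subseteq> topspace T1" "V \<subseteq> topspace T1"
    using calculation openin_subset assms by metis+
  ultimately show "l \<in> Btopology T1 T2"
    by (auto simp: Btopology_def Bcut_Bpair Int_absorb1 bot_prod_def)
qed

lemma inf_Bpair: "inf (Bpair U V) (Bpair U' V') = Bpair (U \<inter> U') (V \<inter> V')"
  by (auto simp: Bpair_def)

lemma sup_Bpair: "sup (Bpair U V) (Bpair U' V') = Bpair (U \<union> U') (V \<union> V')"
  by (auto simp: Bpair_def)

lemma Sup_Bpair_left: "Sup ((\<lambda>U. Bpair U {}) ` F) = Bpair (\<Union>F) {}"
  by (auto simp: fun_eq_iff prod_eq_iff fst_Sup snd_Sup)

lemma Sup_Bpair_right: "Sup ((\<lambda>V. Bpair {} V) ` F) = Bpair {} (\<Union>F)"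
  by (auto simp: fun_eq_iff prod_eq_iff fst_Sup snd_Sup)

lemma Bconst_eq_Bpair: "Bconst X b = Bpair (if fst b then X else {}) (if snd b then X else {})"
  by (auto simp: Bconst_def fun_eq_iff prod_eq_iff bot_prod_def)

lemma Bpair_in_Btopology:
  "topspace T1 = topspace T2 \<Longrightarrow> openin T1 U \<Longrightarrow> openin T2 V \<Longrightarrow> Bpair U V \<in> Btopology T1 T2"
  by (auto simp: Btopology_eq)

definition Bmeets :: "'a set \<Rightarrow> 'a set \<Rightarrow> ('a \<Rightarrow> B4) \<Rightarrow> B4" where
  "Bmeets K1 K2 l = ((\<exists>x\<in>K1. fst (l x)), (\<exists>x\<in>K2. snd (l x)))"

lemma Bmeets_Bpair [simp]: "Bmeets K1 K2 (Bpair U V) = (U \<inter> K1 \<noteq> {}, V \<inter> K2 \<noteq> {})"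
  by (auto simp: Bmeets_def)

lemma Bmeets_Sup: "Bmeets K1 K2 (Sup S) = Sup (Bmeets K1 K2 ` S)"
  by (auto simp: Bmeets_def prod_eq_iff fst_Sup snd_Sup)

lemma Bpoint_Bmeets:
  assumes X: "topspace T1 = topspace T2"
    and K1: "irreducible_closed T1 K1" and K2: "irreducible_closed T2 K2"
  shows "Bpoint T1 T2 (Bmeets K1 K2)"
  unfolding Bpoint_def
proof (intro conjI ballI allI impI)
  fix l m
  assume "l \<in> Btopology T1 T2" "m \<in> Btopology T1 T2"
  then obtain U V U' V' where "l = Bpair U V" "m = Bpair U' V'"
    and "openin T1 U" "openin T2 V" "openin T1 U'" "openin T2 V'"
    unfolding Btopology_eq[OF X] by blast
  then show "Bmeets K1 K2 (inf l m) = inf (Bmeets K1 K2 l) (Bmeets K1 K2 m)"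
    by (simp add: inf_Bpair Int_assoc[symmetric] irreducible_closed_Int_open_eq_empty_iff[OF K1]
        irreducible_closed_Int_open_eq_empty_iff[OF K2])
next
  fix b
  have "K1 \<subseteq> topspace T1" "K1 \<noteq> {}" "K2 \<subseteq> topspace T1" "K2 \<noteq> {}"
    using K1 K2 X closedin_subset unfolding irreducible_closed_def by auto
  then show "Bmeets K1 K2 (Bconst (topspace T1) b) = b"
    by (auto simp: Bconst_eq_Bpair prod_eq_iff Int_absorb1)
qed (rule Bmeets_Sup)

lemma Bmeets_eq_eval_iff:
  assumes X: "topspace T1 = topspace T2"
    and "closedin T1 K1" "closedin T2 K2" "x \<in> topspace T1"
  shows "(\<forall>l\<in>Btopology T1 T2. Bmeets K1 K2 l = l x)
    \<longleftrightarrow> K1 = T1 closure_of {x} \<and> K2 = T2 closure_of {x}"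
proof -
  have "(\<forall>l\<in>Btopology T1 T2. Bmeets K1 K2 l = l x) \<longleftrightarrow>
      (\<forall>U V. openin T1 U \<longrightarrow> openin T2 V \<longrightarrow> Bmeets K1 K2 (Bpair U V) = Bpair U V x)"
    unfolding Btopology_eq[OF X] by blast
  also have "\<dots> \<longleftrightarrow> (\<forall>U V. openin T1 U \<longrightarrow> openin T2 V \<longrightarrow>
        (U \<inter> K1 = {} \<longleftrightarrow> x \<notin> U) \<and> (V \<inter> K2 = {} \<longleftrightarrow> x \<notin> V))"
    by auto
  also have "\<dots> \<longleftrightarrow> (\<forall>U. openin T1 U \<longrightarrow> (U \<inter> K1 = {} \<longleftrightarrow> x \<notin> U))
      \<and> (\<forall>V. openin T2 V \<longrightarrow> (V \<inter> K2 = {} \<longleftrightarrow> x \<notin> V))"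
    using openin_empty by blast
  also have "\<dots> \<longleftrightarrow> K1 = T1 closure_of {x} \<and> K2 = T2 closure_of {x}"
    using assms by (simp add: eq_closure_of_singleton_iff)
  finally show ?thesis .
qed

lemma
  assumes "Bpoint T1 T2 p"
  shows Bpoint_inf: "l \<in> Btopology T1 T2 \<Longrightarrow> m \<in> Btopology T1 T2 \<Longrightarrow> p (inf l m) = inf (p l) (p m)"
    and Bpoint_Sup: "S \<subseteq> Btopology T1 T2 \<Longrightarrow> p (Sup S) = Sup (p ` S)"
    and Bpoint_Bconst: "p (Bconst (topspace T1) b) = b"
  using assms unfolding Bpoint_def by blast+

lemma Bpoint_completely_prime_filters:
  assumes X: "topspace T1 = topspace T2" and p: "Bpoint T1 T2 p"
  shows "completely_prime_filter T1 (\<lambda>U. fst (p (Bpair U {})))"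
    and "completely_prime_filter T2 (\<lambda>V. snd (p (Bpair {} V)))"
proof -
  have left: "Bpair U {} \<in> Btopology T1 T2" if "openin T1 U" for U
    using that X by (simp add: Bpair_in_Btopology)
  have right: "Bpair {} V \<in> Btopology T1 T2" if "openin T2 V" for V
    using that X by (simp add: Bpair_in_Btopology)
  show "completely_prime_filter T1 (\<lambda>U. fst (p (Bpair U {})))"
    unfolding completely_prime_filter_def
  proof (intro conjI allI impI)
    show "fst (p (Bpair (topspace T1) {}))"
      using Bpoint_Bconst[OF p, of Btt] by (simp add: Bconst_eq_Bpair Btt_def)
    show "fst (p (Bpair (U \<inter> V) {})) = (fst (p (Bpair U {})) \<and> fst (p (Bpair V {})))"
      if "openin T1 U \<and> openin T1 V" for U V
      using Bpoint_inf[OF p left left] that by (simp add: inf_Bpair)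
    show "fst (p (Bpair (\<Union>F) {})) = (\<exists>U\<in>F. fst (p (Bpair U {})))"
      if "\<forall>U\<in>F. openin T1 U" for F
    proof -
      have "(\<lambda>U. Bpair U {}) ` F \<subseteq> Btopology T1 T2"
        using that left by blast
      from Bpoint_Sup[OF p this] show ?thesis
        by (simp add: Sup_Bpair_left fst_SUP)
    qed
  qed
  show "completely_prime_filter T2 (\<lambda>V. snd (p (Bpair {} V)))"
    unfolding completely_prime_filter_def
  proof (intro conjI allI impI)
    show "snd (p (Bpair {} (topspace T2)))"
      using Bpoint_Bconst[OF p, of Bff] X by (simp add: Bconst_eq_Bpair Bff_def)
    show "snd (p (Bpair {} (U \<inter> V))) = (snd (p (Bpair {} U)) \<and> snd (p (Bpair {} V)))"
      if "openin T2 U \<and> openin T2 V" for U V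
      using Bpoint_inf[OF p right right] that by (simp add: inf_Bpair)
    show "snd (p (Bpair {} (\<Union>F))) = (\<exists>V\<in>F. snd (p (Bpair {} V)))"
      if "\<forall>V\<in>F. openin T2 V" for F
    proof -
      have "(\<lambda>V. Bpair {} V) ` F \<subseteq> Btopology T1 T2"
        using that right by blast
      from Bpoint_Sup[OF p this] show ?thesis
        by (simp add: Sup_Bpair_right snd_SUP)
    qed
  qed
qed

lemma Bpoint_Bpair:
  assumes X: "topspace T1 = topspace T2" and p: "Bpoint T1 T2 p"
    and U: "openin T1 U" and V: "openin T2 V"
  shows "p (Bpair U V) = (fst (p (Bpair U {})), snd (p (Bpair {} V)))"
proof -
  have in_B: "Bpair U {} \<in> Btopology T1 T2" "Bpair {} V \<in> Btopology T1 T2"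
    "Bpair (topspace T1) {} \<in> Btopology T1 T2" "Bpair {} (topspace T2) \<in> Btopology T1 T2"
    using Bpair_in_Btopology[OF X] U V by simp_all
  have "p (Bpair U {}) = p (inf (Bpair U {}) (Bpair (topspace T1) {}))"
    using openin_subset[OF U] by (simp add: inf_Bpair Int_absorb2)
  also have "\<dots> = inf (p (Bpair U {})) Btt"
    using Bpoint_inf[OF p in_B(1,3)] Bpoint_Bconst[OF p, of Btt]
    by (simp add: Bconst_eq_Bpair Btt_def)
  finally have "\<not> snd (p (Bpair U {}))"
    by (cases "p (Bpair U {})") (simp add: Btt_def)
  have "p (Bpair {} V) = p (inf (Bpair {} V) (Bpair {} (topspace T2)))"
    using openin_subset[OF V] by (simp add: inf_Bpair Int_absorb2)
  also have "\<dots> = inf (p (Bpair {} V)) Bff"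
    using Bpoint_inf[OF p in_B(2,4)] Bpoint_Bconst[OF p, of Bff] X
    by (simp add: Bconst_eq_Bpair Bff_def)
  finally have "\<not> fst (p (Bpair {} V))"
    by (cases "p (Bpair {} V)") (simp add: Bff_def)
  have "p (Bpair U V) = sup (p (Bpair U {})) (p (Bpair {} V))"
    using Bpoint_Sup[OF p, of "{Bpair U {}, Bpair {} V}"] in_B by (simp add: sup_Bpair)
  with \<open>\<not> snd (p (Bpair U {}))\<close> \<open>\<not> fst (p (Bpair {} V))\<close> show ?thesis
    by (simp add: prod_eq_iff)
qed

lemma Bpoint_eq_Bmeets:
  assumes X: "topspace T1 = topspace T2" and p: "Bpoint T1 T2 p"
  obtains K1 K2 where "irreducible_closed T1 K1" "irreducible_closed T2 K2"
    "\<And>l. l \<in> Btopology T1 T2 \<Longrightarrow> p l = Bmeets K1 K2 l"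
proof -
  obtain K1 where K1: "irreducible_closed T1 K1"
    "\<And>U. openin T1 U \<Longrightarrow> fst (p (Bpair U {})) \<longleftrightarrow> U \<inter> K1 \<noteq> {}"
    using completely_prime_filter_eq_meets_irreducible[OF Bpoint_completely_prime_filters(1)[OF X p]]
    by metis
  obtain K2 where K2: "irreducible_closed T2 K2"
    "\<And>V. openin T2 V \<Longrightarrow> snd (p (Bpair {} V)) \<longleftrightarrow> V \<inter> K2 \<noteq> {}"
    using completely_prime_filter_eq_meets_irreducible[OF Bpoint_completely_prime_filters(2)[OF X p]]
    by metis
  have "p l = Bmeets K1 K2 l" if "l \<in> Btopology T1 T2" for l
  proof -
    from that obtain U V where l: "l = Bpair U V" and U: "openin T1 U" and V: "openin T2 V"
      unfolding Btopology_eq[OF X] by blast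
    then show ?thesis
      using Bpoint_Bpair[OF X p U V] by (simp add: K1(2) K2(2))
  qed
  with K1(1) K2(1) show thesis
    using that by blast
qed

theorem mainTheorem7:
  fixes T1 T2 :: "'a topology"
  assumes "topspace T1 = topspace T2"
  shows "B_sober T1 T2 \<longleftrightarrow>
    (\<forall>Ktt Kff. irreducible_closed T1 Ktt \<and> irreducible_closed T2 Kff \<longrightarrow>
       (\<exists>!x. x \<in> topspace T1 \<and> Ktt = T1 closure_of {x} \<and> Kff = T2 closure_of {x}))"
proof
  assume sober: "B_sober T1 T2"
  show "\<forall>Ktt Kff. irreducible_closed T1 Ktt \<and> irreducible_closed T2 Kff \<longrightarrow>
    (\<exists>!x. x \<in> topspace T1 \<and> Ktt = T1 closure_of {x} \<and> Kff = T2 closure_of {x})"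
  proof (intro allI impI)
    fix K1 K2
    assume K: "irreducible_closed T1 K1 \<and> irreducible_closed T2 K2"
    then have "closedin T1 K1" "closedin T2 K2"
      by (simp_all add: irreducible_closed_def)
    moreover have "\<exists>!x. x \<in> topspace T1 \<and> (\<forall>l\<in>Btopology T1 T2. Bmeets K1 K2 l = l x)"
      using sober Bpoint_Bmeets[OF assms] K unfolding B_sober_def by blast
    ultimately show "\<exists>!x. x \<in> topspace T1 \<and> K1 = T1 closure_of {x} \<and> K2 = T2 closure_of {x}"
      by (simp add: Bmeets_eq_eval_iff[OF assms] cong: conj_cong)
  qed
next
  assume points: "\<forall>Ktt Kff. irreducible_closed T1 Ktt \<and> irreducible_closed T2 Kff \<longrightarrow>
    (\<exists>!x. x \<in> topspace T1 \<and> Ktt = T1 closure_of {x} \<and> Kff = T2 closure_of {x})"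
  show "B_sober T1 T2"
    unfolding B_sober_def
  proof (intro allI impI)
    fix p
    assume "Bpoint T1 T2 p"
    then obtain K1 K2 where K: "irreducible_closed T1 K1" "irreducible_closed T2 K2"
      and p: "\<And>l. l \<in> Btopology T1 T2 \<Longrightarrow> p l = Bmeets K1 K2 l"
      using Bpoint_eq_Bmeets[OF assms] by blast
    moreover from K have "closedin T1 K1" "closedin T2 K2"
      by (simp_all add: irreducible_closed_def)
    ultimately show "\<exists>!x. x \<in> topspace T1 \<and> (\<forall>l\<in>Btopology T1 T2. p l = l x)"
      using points by (simp add: Bmeets_eq_eval_iff[OF assms] cong: conj_cong)
  qed
qed

end
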